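(* Let $\mathcal H$ be a separable Hilbert space and let $\Phi:B(\mathcal H)\to B(\mathcal H)$ be a quantum channel with Kraus representation $\Phi(A)=\sum_{k\ge1}V_k^*AV_k$, $V_k\in B(\mathcal H)$, $\sum_kV_k^*V_k=I$. Then the multiplicative domain of $\Phi$ satisfies \[ \mathcal M(\Phi)=\{V_jV_k^*:\ j,k=1,2,\dots\}'. \]
   Context: A quantum channel is a unital normal completely positive map $\Phi:B(\mathcal H)\to B(\mathcal H)$. The multiplicative domain is $\mathcal M(\Phi)=\{A\in B(\mathcal H): \Phi(A^*A)=\Phi(A)^*\Phi(A),\ \Phi(AA^* )=\Phi(A)\Phi(A)^*\}$. $'$ denotes the commutant. *)

theory Defs
  imports "HOL-Analysis.Analysis" "HOL-Library.Function_Algebras"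
begin

text \<open>Separable complex Hilbert space modelled concretely as \<open>\<ell>\<^sup>2('i)\<close> for a
countable index type \<open>'i\<close>.  Vectors are functions \<open>'i \<Rightarrow> complex\<close>;
bounded operators are functions on vectors that preserve \<open>\<ell>\<^sup>2\<close>, are linear and
bounded on it, and are normalised to \<open>0\<close> outside \<open>\<ell>\<^sup>2\<close> (so that operator equality
is plain function equality).\<close>

type_synonym 'i vec = "'i \<Rightarrow> complex"
type_synonym 'i op = "'i vec \<Rightarrow> 'i vec"

definition ell2 :: "'i vec set" where
  "ell2 = {x. (\<lambda>i. (cmod (x i))^2) summable_on UNIV}"

definition l2norm :: "'i vec \<Rightarrow> real" where
  "l2norm x = sqrt (infsum (\<lambda>i. (cmod (x i))^2) UNIV)"

definition cinner :: "'i vec \<Rightarrow> 'i vec \<Rightarrow> complex" where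
  "cinner x y = infsum (\<lambda>i. cnj (x i) * y i) UNIV"

definition scal :: "complex \<Rightarrow> 'i vec \<Rightarrow> 'i vec" where
  "scal a x = (\<lambda>i. a * x i)"

definition bounded_op :: "'i op \<Rightarrow> bool" where
  "bounded_op T \<longleftrightarrow>
     (\<forall>x\<in>ell2. T x \<in> ell2) \<and>
     (\<forall>x\<in>ell2. \<forall>y\<in>ell2. T (x + y) = T x + T y) \<and>
     (\<forall>x\<in>ell2. \<forall>a. T (scal a x) = scal a (T x)) \<and>
     (\<exists>C. \<forall>x\<in>ell2. l2norm (T x) \<le> C * l2norm x) \<and>
     (\<forall>x. x \<notin> ell2 \<longrightarrow> T x = 0)"

definition adj :: "'i op \<Rightarrow> 'i op" where
  "adj T = (THE S. bounded_op S \<and> (\<forall>x\<in>ell2. \<forall>y\<in>ell2. cinner (S x) y = cinner x (T y)))"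

definition kraus :: "(nat \<Rightarrow> 'i op) \<Rightarrow> 'i op \<Rightarrow> 'i op" where
  "kraus V A = (THE T. bounded_op T \<and>
      (\<forall>x\<in>ell2. (\<lambda>n. l2norm ((\<Sum>k<n. adj (V k) (A (V k x))) - T x)) \<longlonglongrightarrow> 0))"

definition mult_domain :: "('i op \<Rightarrow> 'i op) \<Rightarrow> 'i op set" where
  "mult_domain \<Phi> = {A. bounded_op A \<and>
      \<Phi> (adj A \<circ> A) = adj (\<Phi> A) \<circ> \<Phi> A \<and>
      \<Phi> (A \<circ> adj A) = \<Phi> A \<circ> adj (\<Phi> A)}"

definition commutant :: "'i op set \<Rightarrow> 'i op set" where
  "commutant S = {A. bounded_op A \<and> (\<forall>B\<in>S. A \<circ> B = B \<circ> A)}"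

end

theory Submission
  imports Defs
begin

(* For a bounded A the Schwarz defect is a sum of squares,
     <(Phi(A^* A) - Phi(A)^* Phi(A)) x, x> = sum_k |A V_k x - V_k Phi(A) x|^2,
   so Phi(A^* A) = Phi(A)^* Phi(A) holds exactly when A V_k = V_k Phi(A) for all k.  Applied to
   A and to A^*, membership in the multiplicative domain means A V_k = V_k Phi(A) and
   V_k^* A = Phi(A) V_k^* for all k, whence A V_j V_k^* = V_j Phi(A) V_k^* = V_j V_k^* A.
   Conversely, if A commutes with every V_j V_k^*, then
   V_k Phi(A) = sum_j V_k V_j^* A V_j = A V_k sum_j V_j^* V_j = A V_k, and the same holds for A^*
   because the family V_j V_k^* is closed under adjoints.  Countability of the index type is
   never used: the argument works in l^2 over any index set. *)

section \<open>The sequence space \<open>\<ell>\<^sup>2\<close>\<close>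

lemma l2norm_nonneg: "0 \<le> l2norm x"
  by (simp add: l2norm_def infsum_nonneg)

lemma l2norm_power2: "(l2norm x)^2 = infsum (\<lambda>i. (cmod (x i))^2) UNIV"
  by (simp add: l2norm_def infsum_nonneg)

lemma l2norm_zero [simp]: "l2norm 0 = 0"
  by (simp add: l2norm_def)

lemma L2_set_le_l2norm:
  assumes "x \<in> ell2"
  shows "L2_set (\<lambda>i. cmod (x i)) F \<le> l2norm x"
proof (cases "finite F")
  case True
  have "(\<Sum>i\<in>F. (cmod (x i))^2) \<le> (l2norm x)^2"
    unfolding l2norm_power2 using assms True by (intro finite_sum_le_infsum) (auto simp: ell2_def)
  then show ?thesis
    unfolding L2_set_def by (rule real_le_lsqrt[OF l2norm_nonneg])
qed (simp add: l2norm_nonneg)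

lemma norm_le_l2norm: "x \<in> ell2 \<Longrightarrow> cmod (x i) \<le> l2norm x"
  using L2_set_le_l2norm[of x "{i}"] by simp

lemma ell2_l2norm_boundI:
  assumes bound: "\<And>F. finite F \<Longrightarrow> L2_set (\<lambda>i. cmod (x i)) F \<le> c"
  shows "x \<in> ell2" "l2norm x \<le> c"
proof -
  have c: "0 \<le> c" using bound[of "{}"] by simp
  have sq: "(\<Sum>i\<in>F. (cmod (x i))^2) \<le> c^2" if "finite F" for F
    using power_mono[OF bound[OF that] L2_set_nonneg, of 2] by (simp add: L2_set_def sum_nonneg)
  have summable: "(\<lambda>i. (cmod (x i))^2) summable_on UNIV"
    by (rule nonneg_bdd_above_summable_on) (auto intro!: bdd_aboveI2 sq)
  then show "x \<in> ell2" by (simp add: ell2_def)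
  have "(l2norm x)^2 \<le> c^2"
    unfolding l2norm_power2 by (rule infsum_le_finite_sums[OF summable]) (simp add: sq)
  then show "l2norm x \<le> c" using c by (rule power2_le_imp_le)
qed

lemma
  assumes "x \<in> ell2" "y \<in> ell2"
  shows ell2_add [simp]: "x + y \<in> ell2"
    and l2norm_triangle: "l2norm (x + y) \<le> l2norm x + l2norm y"
proof -
  have bound: "L2_set (\<lambda>i. cmod ((x + y) i)) F \<le> l2norm x + l2norm y" for F
  proof -
    have "L2_set (\<lambda>i. cmod ((x + y) i)) F \<le> L2_set (\<lambda>i. cmod (x i) + cmod (y i)) F"
      by (rule L2_set_mono) (auto simp: norm_triangle_ineq)
    also have "\<dots> \<le> L2_set (\<lambda>i. cmod (x i)) F + L2_set (\<lambda>i. cmod (y i)) F"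
      by (rule L2_set_triangle_ineq)
    also have "\<dots> \<le> l2norm x + l2norm y"
      using assms by (intro add_mono L2_set_le_l2norm)
    finally show ?thesis .
  qed
  show "x + y \<in> ell2" using bound by (rule ell2_l2norm_boundI)
  show "l2norm (x + y) \<le> l2norm x + l2norm y" using bound by (rule ell2_l2norm_boundI)
qed

lemma ell2_zero [simp]: "0 \<in> ell2"
  by (simp add: ell2_def)

lemma ell2_scal [simp]:
  assumes "x \<in> ell2"
  shows "scal a x \<in> ell2"
proof -
  have "(\<lambda>i. (cmod a)^2 * (cmod (x i))^2) summable_on UNIV"
    using assms by (intro summable_on_cmult_right) (simp add: ell2_def)
  then show ?thesis by (simp add: ell2_def scal_def norm_mult power_mult_distrib)
qed

lemma uminus_eq_scal: "- x = scal (-1) x"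
  by (simp add: scal_def fun_eq_iff)

lemma diff_eq_add_scal: "x - y = x + scal (-1) y"
  by (simp add: scal_def fun_eq_iff)

lemma ell2_diff [simp]: "x \<in> ell2 \<Longrightarrow> y \<in> ell2 \<Longrightarrow> x - y \<in> ell2"
  by (simp add: diff_eq_add_scal)

lemma ell2_sum [simp]: "(\<And>k. k \<in> K \<Longrightarrow> f k \<in> ell2) \<Longrightarrow> sum f K \<in> ell2"
  by (induction K rule: infinite_finite_induct) auto

lemma scal_zero [simp]: "scal a 0 = 0"
  by (simp add: scal_def zero_fun_def)

lemma scal_add: "scal a (x + y) = scal a x + scal a y"
  by (simp add: scal_def fun_eq_iff distrib_left)

lemma l2norm_scal: "l2norm (scal a x) = cmod a * l2norm x"
proof -
  have "infsum (\<lambda>i. (cmod (scal a x i))^2) UNIV = (cmod a)^2 * infsum (\<lambda>i. (cmod (x i))^2) UNIV"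
    by (simp add: scal_def norm_mult power_mult_distrib infsum_cmult_right')
  then show ?thesis by (simp add: l2norm_def real_sqrt_mult)
qed

lemma l2norm_minus_commute: "l2norm (x - y) = l2norm (y - x)"
  by (metis l2norm_scal uminus_eq_scal minus_diff_eq norm_minus_cancel norm_one mult_1)

lemma
  assumes "x \<in> ell2" "y \<in> ell2"
  shows abs_cinner_summable: "(\<lambda>i. cmod (x i) * cmod (y i)) summable_on UNIV"
    and abs_cinner_le: "infsum (\<lambda>i. cmod (x i) * cmod (y i)) UNIV \<le> l2norm x * l2norm y"
proof -
  have partial: "(\<Sum>i\<in>F. cmod (x i) * cmod (y i)) \<le> l2norm x * l2norm y" for F
  proof -
    have "(\<Sum>i\<in>F. cmod (x i) * cmod (y i)) \<le> L2_set (\<lambda>i. cmod (x i)) F * L2_set (\<lambda>i. cmod (y i)) F"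
      using L2_set_mult_ineq[of "\<lambda>i. cmod (x i)" "\<lambda>i. cmod (y i)" F] by simp
    also have "\<dots> \<le> l2norm x * l2norm y"
      using assms by (intro mult_mono L2_set_le_l2norm) (auto simp: l2norm_nonneg L2_set_nonneg)
    finally show ?thesis .
  qed
  show summable: "(\<lambda>i. cmod (x i) * cmod (y i)) summable_on UNIV"
    by (rule nonneg_bdd_above_summable_on) (auto intro!: bdd_aboveI2 partial)
  show "infsum (\<lambda>i. cmod (x i) * cmod (y i)) UNIV \<le> l2norm x * l2norm y"
    by (rule infsum_le_finite_sums[OF summable partial])
qed

lemma cinner_summable:
  assumes "x \<in> ell2" "y \<in> ell2"
  shows "(\<lambda>i. cnj (x i) * y i) summable_on UNIV"
  using abs_cinner_summable[OF assms]
  by (simp add: summable_on_iff_abs_summable_on_complex norm_mult)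

lemma cinner_cauchy_schwarz:
  assumes "x \<in> ell2" "y \<in> ell2"
  shows "cmod (cinner x y) \<le> l2norm x * l2norm y"
proof -
  have "cmod (cinner x y) \<le> infsum (\<lambda>i. cmod (cnj (x i) * y i)) UNIV"
    unfolding cinner_def using abs_cinner_summable[OF assms]
    by (intro norm_infsum_bound) (simp add: norm_mult)
  also have "\<dots> = infsum (\<lambda>i. cmod (x i) * cmod (y i)) UNIV"
    by (simp add: norm_mult)
  also have "\<dots> \<le> l2norm x * l2norm y"
    by (rule abs_cinner_le[OF assms])
  finally show ?thesis .
qed

lemma cinner_add_right: "x \<in> ell2 \<Longrightarrow> y \<in> ell2 \<Longrightarrow> z \<in> ell2 \<Longrightarrow>
    cinner x (y + z) = cinner x y + cinner x z"
  unfolding cinner_def by (simp add: distrib_left infsum_add cinner_summable)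

lemma cinner_add_left: "x \<in> ell2 \<Longrightarrow> y \<in> ell2 \<Longrightarrow> z \<in> ell2 \<Longrightarrow>
    cinner (y + z) x = cinner y x + cinner z x"
  unfolding cinner_def by (simp add: distrib_right infsum_add cinner_summable)

lemma cinner_scal_right: "cinner x (scal a y) = a * cinner x y"
  unfolding cinner_def scal_def by (simp add: mult.left_commute infsum_cmult_right')

lemma cinner_scal_left: "cinner (scal a y) x = cnj a * cinner y x"
  unfolding cinner_def scal_def by (simp add: mult.assoc infsum_cmult_right')

lemma cnj_cinner: "cnj (cinner x y) = cinner y x"
  unfolding cinner_def by (simp flip: infsum_cnj add: mult.commute)

lemma cinner_diff_right: "x \<in> ell2 \<Longrightarrow> y \<in> ell2 \<Longrightarrow> z \<in> ell2 \<Longrightarrow>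
    cinner x (y - z) = cinner x y - cinner x z"
  by (simp add: diff_eq_add_scal cinner_add_right cinner_scal_right)

lemma cinner_diff_left: "x \<in> ell2 \<Longrightarrow> y \<in> ell2 \<Longrightarrow> z \<in> ell2 \<Longrightarrow>
    cinner (y - z) x = cinner y x - cinner z x"
  by (simp add: diff_eq_add_scal cinner_add_left cinner_scal_left)

lemma cinner_zero_left [simp]: "cinner 0 x = 0"
  by (simp add: cinner_def)

lemma cinner_zero_right [simp]: "cinner x 0 = 0"
  by (simp add: cinner_def)

lemma cinner_sum_right: "x \<in> ell2 \<Longrightarrow> (\<And>k. k \<in> K \<Longrightarrow> f k \<in> ell2) \<Longrightarrow>
    cinner x (sum f K) = (\<Sum>k\<in>K. cinner x (f k))"
  by (induction K rule: infinite_finite_induct) (auto simp: cinner_add_right)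

lemma cinner_sum_left: "x \<in> ell2 \<Longrightarrow> (\<And>k. k \<in> K \<Longrightarrow> f k \<in> ell2) \<Longrightarrow>
    cinner (sum f K) x = (\<Sum>k\<in>K. cinner (f k) x)"
  by (induction K rule: infinite_finite_induct) (auto simp: cinner_add_left)

lemma infsum_complex_of_real:
  "infsum (\<lambda>i. complex_of_real (g i)) A = complex_of_real (infsum g A)"
proof (cases "g summable_on A")
  case True
  then show ?thesis by (intro infsumI has_sum_of_real has_sum_infsum)
next
  case False
  then have "\<not> (\<lambda>i. complex_of_real (g i)) summable_on A"
    using summable_on_bounded_linear[OF bounded_linear_Re] by fastforce
  then show ?thesis using False by (simp add: infsum_not_exists)
qed

lemma cinner_self: "cinner x x = complex_of_real ((l2norm x)^2)"
proof -
  have "cnj (x i) * x i = complex_of_real ((cmod (x i))^2)" for i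
    by (metis complex_norm_square mult.commute of_real_power)
  then show ?thesis
    by (simp add: cinner_def l2norm_power2 flip: infsum_complex_of_real)
qed

lemma l2norm_eq_zeroD:
  assumes "x \<in> ell2" "l2norm x = 0"
  shows "x = 0"
proof
  fix i
  have "cmod (x i) \<le> 0" using norm_le_l2norm[OF assms(1), of i] assms(2) by simp
  then show "x i = 0 i" by simp
qed

lemma ell2_eqI:
  assumes "a \<in> ell2" "b \<in> ell2" "\<And>y. y \<in> ell2 \<Longrightarrow> cinner a y = cinner b y"
  shows "a = b"
proof -
  have "cinner (a - b) (a - b) = 0"
    using assms by (simp add: cinner_diff_left)
  then have "l2norm (a - b) = 0" by (simp add: cinner_self)
  then show ?thesis using l2norm_eq_zeroD[of "a - b"] assms(1,2) by simp
qed

abbreviation l2_tendsto :: "('a \<Rightarrow> 'i vec) \<Rightarrow> 'i vec \<Rightarrow> 'a filter \<Rightarrow> bool" where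
  "l2_tendsto a b F \<equiv> ((\<lambda>n. l2norm (a n - b)) \<longlongrightarrow> 0) F"

lemma l2_tendsto_cinner_left:
  assumes "\<And>n. a n \<in> ell2" "b \<in> ell2" "y \<in> ell2" "l2_tendsto a b F"
  shows "((\<lambda>n. cinner (a n) y) \<longlongrightarrow> cinner b y) F"
proof -
  have "((\<lambda>n. cinner (a n) y - cinner b y) \<longlongrightarrow> 0) F"
  proof (rule Lim_null_comparison)
    show "\<forall>\<^sub>F n in F. cmod (cinner (a n) y - cinner b y) \<le> l2norm (a n - b) * l2norm y"
      using assms cinner_cauchy_schwarz[of "a _ - b" y] by (simp add: cinner_diff_left[symmetric])
    show "((\<lambda>n. l2norm (a n - b) * l2norm y) \<longlongrightarrow> 0) F"
      using assms(4) by (rule tendsto_mult_left_zero)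
  qed
  then show ?thesis by (rule LIM_zero_cancel)
qed

lemma l2_tendsto_cinner_right:
  assumes "\<And>n. a n \<in> ell2" "b \<in> ell2" "y \<in> ell2" "l2_tendsto a b F"
  shows "((\<lambda>n. cinner y (a n)) \<longlongrightarrow> cinner y b) F"
  using tendsto_cnj[OF l2_tendsto_cinner_left[OF assms]] by (simp add: cnj_cinner)

lemma l2_tendsto_unique:
  assumes "F \<noteq> bot" "\<And>n. a n \<in> ell2" "b \<in> ell2" "c \<in> ell2"
    and "l2_tendsto a b F" "l2_tendsto a c F"
  shows "b = c"
proof (rule ell2_eqI)
  show "cinner b y = cinner c y" if y: "y \<in> ell2" for y
    by (rule tendsto_unique[OF assms(1) l2_tendsto_cinner_left[OF assms(2,3) y assms(5)]
          l2_tendsto_cinner_left[OF assms(2,4) y assms(6)]])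
qed (use assms in auto)

lemma l2_tendsto_add:
  assumes "\<And>n. a n \<in> ell2" "\<And>n. b n \<in> ell2" "\<alpha> \<in> ell2" "\<beta> \<in> ell2"
    and "l2_tendsto a \<alpha> F" "l2_tendsto b \<beta> F"
  shows "l2_tendsto (\<lambda>n. a n + b n) (\<alpha> + \<beta>) F"
proof (rule Lim_null_comparison)
  have "l2norm ((a n + b n) - (\<alpha> + \<beta>)) \<le> l2norm (a n - \<alpha>) + l2norm (b n - \<beta>)" for n
    using l2norm_triangle[of "a n - \<alpha>" "b n - \<beta>"] assms(1-4) by (simp add: algebra_simps)
  then show "\<forall>\<^sub>F n in F. norm (l2norm ((a n + b n) - (\<alpha> + \<beta>))) \<le> l2norm (a n - \<alpha>) + l2norm (b n - \<beta>)"
    by (simp add: l2norm_nonneg)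
  show "((\<lambda>n. l2norm (a n - \<alpha>) + l2norm (b n - \<beta>)) \<longlongrightarrow> 0) F"
    using tendsto_add_zero[OF assms(5,6)] .
qed

lemma l2_tendsto_scal:
  assumes "l2_tendsto a b F"
  shows "l2_tendsto (\<lambda>n. scal c (a n)) (scal c b) F"
proof -
  have "scal c (a n) - scal c b = scal c (a n - b)" for n
    by (simp add: scal_def fun_eq_iff algebra_simps)
  then show ?thesis
    using tendsto_mult_right_zero[OF assms, of "cmod c"] by (simp add: l2norm_scal)
qed

definition basis_vec :: "'i \<Rightarrow> 'i vec" where
  "basis_vec i = (\<lambda>j. if j = i then 1 else 0)"

definition restrict_vec :: "'i set \<Rightarrow> 'i vec \<Rightarrow> 'i vec" where
  "restrict_vec F y = (\<lambda>j. if j \<in> F then y j else 0)"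

lemma ell2_finite_support: "finite {i. x i \<noteq> 0} \<Longrightarrow> x \<in> ell2"
  unfolding ell2_def by (intro CollectI finite_nonzero_values_imp_summable_on) simp

lemma basis_vec_ell2 [simp]: "basis_vec i \<in> ell2"
  by (rule ell2_finite_support) (simp add: basis_vec_def)

lemma restrict_vec_ell2 [simp]: "y \<in> ell2 \<Longrightarrow> restrict_vec F y \<in> ell2"
  unfolding ell2_def mem_Collect_eq
  by (rule summable_on_comparison_test[where f="\<lambda>i. (cmod (y i))^2"])
     (auto simp: restrict_vec_def)

lemma sum_apply: "(sum f K) j = (\<Sum>k\<in>K. f k j)"
  by (induction K rule: infinite_finite_induct) auto

lemma restrict_vec_eq_sum:
  assumes "finite F"
  shows "restrict_vec F y = (\<Sum>i\<in>F. scal (y i) (basis_vec i))"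
proof
  fix j
  have "(\<Sum>i\<in>F. scal (y i) (basis_vec i)) j = (\<Sum>i\<in>F. if j = i then y i else 0)"
    by (auto simp: sum_apply scal_def basis_vec_def intro: sum.cong)
  then show "restrict_vec F y j = (\<Sum>i\<in>F. scal (y i) (basis_vec i)) j"
    using assms by (simp add: restrict_vec_def)
qed

lemma l2norm_restrict_vec_power2:
  assumes "finite F"
  shows "(l2norm (restrict_vec F y))^2 = (\<Sum>i\<in>F. (cmod (y i))^2)"
proof -
  have "(l2norm (restrict_vec F y))^2 = infsum (\<lambda>i. (cmod (y i))^2) F"
    unfolding l2norm_power2 by (rule infsum_cong_neutral) (auto simp: restrict_vec_def)
  then show ?thesis using assms by simp
qed

lemma l2_tendsto_restrict_vec:
  assumes y: "y \<in> ell2"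
  shows "l2_tendsto (\<lambda>F. restrict_vec F y) y (finite_subsets_at_top UNIV)"
proof -
  define g where "g j = (cmod (y j))^2" for j
  have g: "g summable_on UNIV"
    using y by (simp add: g_def[abs_def] ell2_def)
  have tail: "(l2norm (restrict_vec F y - y))^2 = infsum g UNIV - sum g F" if F: "finite F" for F
  proof -
    have "(l2norm (restrict_vec F y - y))^2 = infsum g (UNIV - F)"
      unfolding l2norm_power2 by (rule infsum_cong_neutral) (auto simp: restrict_vec_def g_def)
    also have "\<dots> = infsum g UNIV - sum g F"
      using F g by (simp add: infsum_Diff summable_on_subset_banach)
    finally show ?thesis .
  qed
  have "(sum g \<longlongrightarrow> infsum g UNIV) (finite_subsets_at_top UNIV)"
    using g by (simp add: has_sum_def[symmetric])
  then have "((\<lambda>F. sqrt (infsum g UNIV - sum g F)) \<longlongrightarrow> 0) (finite_subsets_at_top UNIV)"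
    using tendsto_real_sqrt[OF tendsto_diff[OF tendsto_const[of "infsum g UNIV"]]] by fastforce
  moreover have "\<forall>\<^sub>F F in finite_subsets_at_top UNIV.
      sqrt (infsum g UNIV - sum g F) = l2norm (restrict_vec F y - y)"
    by (rule eventually_finite_subsets_at_top_weakI) (simp add: tail[symmetric] l2norm_nonneg)
  ultimately show ?thesis by (rule Lim_transform_eventually)
qed

lemma l2norm_diff_coordinate_limit_le:
  assumes a: "\<And>m. a m \<in> ell2" and lim: "\<And>i. (\<lambda>m. a m i) \<longlonglongrightarrow> b i"
    and bound: "\<And>m. m \<ge> N \<Longrightarrow> l2norm (a n - a m) \<le> e"
  shows "a n - b \<in> ell2" "l2norm (a n - b) \<le> e"
proof -
  have "L2_set (\<lambda>i. cmod ((a n - b) i)) F \<le> e" if F: "finite F" for F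
  proof (rule LIMSEQ_le_const2)
    show "(\<lambda>m. L2_set (\<lambda>i. cmod ((a n - a m) i)) F) \<longlonglongrightarrow> L2_set (\<lambda>i. cmod ((a n - b) i)) F"
      unfolding L2_set_def minus_apply by (intro tendsto_intros lim)
    have "L2_set (\<lambda>i. cmod ((a n - a m) i)) F \<le> e" if "m \<ge> N" for m
      using L2_set_le_l2norm[of "a n - a m" F] a bound[OF that] by simp
    then show "\<exists>N. \<forall>m\<ge>N. L2_set (\<lambda>i. cmod ((a n - a m) i)) F \<le> e"
      by blast
  qed
  then show "a n - b \<in> ell2" "l2norm (a n - b) \<le> e"
    by (fact ell2_l2norm_boundI)+
qed

lemma Cauchy_coordinate:
  assumes a: "\<And>n. a n \<in> ell2"
    and Cauchy: "\<And>e. e > 0 \<Longrightarrow> \<exists>N. \<forall>m\<ge>N. \<forall>n\<ge>N. l2norm (a m - a n) < e"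
  shows "Cauchy (\<lambda>n. a n i)"
proof (rule metric_CauchyI)
  fix e :: real assume "e > 0"
  then obtain N where N: "\<forall>m\<ge>N. \<forall>n\<ge>N. l2norm (a m - a n) < e" using Cauchy by blast
  have "dist (a m i) (a n i) < e" if "m \<ge> N" "n \<ge> N" for m n
  proof -
    have "dist (a m i) (a n i) \<le> l2norm (a m - a n)"
      using norm_le_l2norm[of "a m - a n" i] a by (simp add: dist_norm)
    also have "\<dots> < e" using N that by blast
    finally show ?thesis .
  qed
  then show "\<exists>N. \<forall>m\<ge>N. \<forall>n\<ge>N. dist (a m i) (a n i) < e" by blast
qed

lemma ell2_complete:
  assumes a: "\<And>n. a n \<in> ell2"
    and Cauchy: "\<And>e. e > 0 \<Longrightarrow> \<exists>N. \<forall>m\<ge>N. \<forall>n\<ge>N. l2norm (a m - a n) < e"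
  shows "\<exists>b\<in>ell2. l2_tendsto a b sequentially"
proof -
  have "Cauchy (\<lambda>n. a n i)" for i using a Cauchy by (rule Cauchy_coordinate)
  then have "convergent (\<lambda>n. a n i)" for i by (simp add: Cauchy_convergent_iff)
  then obtain b where b: "\<And>i. (\<lambda>n. a n i) \<longlonglongrightarrow> b i"
    unfolding convergent_def by metis
  have close: "\<exists>N. \<forall>n\<ge>N. a n - b \<in> ell2 \<and> l2norm (a n - b) \<le> e" if "e > 0" for e
  proof -
    obtain N where N: "\<forall>m\<ge>N. \<forall>n\<ge>N. l2norm (a m - a n) < e" using Cauchy \<open>e > 0\<close> by blast
    have "a n - b \<in> ell2 \<and> l2norm (a n - b) \<le> e" if "n \<ge> N" for n
    proof -
      have "l2norm (a n - a m) \<le> e" if "m \<ge> N" for m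
        using N that \<open>n \<ge> N\<close> by (simp add: less_imp_le)
      from l2norm_diff_coordinate_limit_le[OF a b this] show ?thesis by blast
    qed
    then show ?thesis by blast
  qed
  obtain N where "a N - b \<in> ell2" using close[OF zero_less_one] by blast
  moreover have "b = a N - (a N - b)" by simp
  ultimately have "b \<in> ell2" using a[of N] by (metis ell2_diff)
  moreover have "l2_tendsto a b sequentially"
  proof (rule LIMSEQ_I)
    fix r :: real assume "r > 0"
    then obtain N where "\<forall>n\<ge>N. l2norm (a n - b) \<le> r / 2" using close[of "r / 2"] by auto
    with \<open>r > 0\<close> have "\<forall>n\<ge>N. norm (l2norm (a n - b) - 0) < r"
      by (auto simp: l2norm_nonneg)
    then show "\<exists>N. \<forall>n\<ge>N. norm (l2norm (a n - b) - 0) < r" by blast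
  qed
  ultimately show ?thesis by blast
qed

section \<open>Bounded operators\<close>

lemma bounded_op_ell2: "bounded_op T \<Longrightarrow> x \<in> ell2 \<Longrightarrow> T x \<in> ell2"
  by (simp add: bounded_op_def)

lemma bounded_op_add: "bounded_op T \<Longrightarrow> x \<in> ell2 \<Longrightarrow> y \<in> ell2 \<Longrightarrow> T (x + y) = T x + T y"
  by (simp add: bounded_op_def)

lemma bounded_op_scal: "bounded_op T \<Longrightarrow> x \<in> ell2 \<Longrightarrow> T (scal a x) = scal a (T x)"
  by (simp add: bounded_op_def)

lemma bounded_op_outside: "bounded_op T \<Longrightarrow> x \<notin> ell2 \<Longrightarrow> T x = 0"
  by (simp add: bounded_op_def)

lemma bounded_op_norm_bound:
  assumes "bounded_op T"
  obtains C where "C \<ge> 0" "\<And>x. x \<in> ell2 \<Longrightarrow> l2norm (T x) \<le> C * l2norm x"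
proof -
  obtain C where C: "\<forall>x\<in>ell2. l2norm (T x) \<le> C * l2norm x"
    using assms by (auto simp: bounded_op_def)
  have "l2norm (T x) \<le> max C 0 * l2norm x" if "x \<in> ell2" for x
    using C that mult_right_mono[OF max.cobounded1[of C 0] l2norm_nonneg[of x]] by auto
  then show ?thesis by (intro that[of "max C 0"]) auto
qed

lemma bounded_op_zero: "bounded_op T \<Longrightarrow> T 0 = 0"
  using bounded_op_add[of T 0 0] by simp

lemma bounded_op_diff:
  "bounded_op T \<Longrightarrow> x \<in> ell2 \<Longrightarrow> y \<in> ell2 \<Longrightarrow> T (x - y) = T x - T y"
  by (metis diff_eq_add_scal bounded_op_add bounded_op_scal ell2_scal)

lemma bounded_op_sum:
  "bounded_op T \<Longrightarrow> (\<And>k. k \<in> K \<Longrightarrow> f k \<in> ell2) \<Longrightarrow> T (sum f K) = (\<Sum>k\<in>K. T (f k))"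
  by (induction K rule: infinite_finite_induct) (auto simp: bounded_op_zero bounded_op_add)

lemma bounded_opI:
  assumes "\<And>x. x \<in> ell2 \<Longrightarrow> T x \<in> ell2"
    and "\<And>x y. x \<in> ell2 \<Longrightarrow> y \<in> ell2 \<Longrightarrow> T (x + y) = T x + T y"
    and "\<And>x a. x \<in> ell2 \<Longrightarrow> T (scal a x) = scal a (T x)"
    and "\<And>x. x \<in> ell2 \<Longrightarrow> l2norm (T x) \<le> C * l2norm x"
    and "\<And>x. x \<notin> ell2 \<Longrightarrow> T x = 0"
  shows "bounded_op T"
  using assms unfolding bounded_op_def by blast

lemma bounded_op_comp:
  assumes S: "bounded_op S" and T: "bounded_op T"
  shows "bounded_op (S \<circ> T)"
proof -
  obtain C where C: "C \<ge> 0" "\<And>x. x \<in> ell2 \<Longrightarrow> l2norm (S x) \<le> C * l2norm x"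
    using bounded_op_norm_bound[OF S] by blast
  obtain D where D: "\<And>x. x \<in> ell2 \<Longrightarrow> l2norm (T x) \<le> D * l2norm x"
    using bounded_op_norm_bound[OF T] by blast
  show ?thesis
  proof (rule bounded_opI[where C = "C * D"])
    show "l2norm ((S \<circ> T) x) \<le> (C * D) * l2norm x" if x: "x \<in> ell2" for x
    proof -
      have "l2norm (S (T x)) \<le> C * l2norm (T x)" using C(2) bounded_op_ell2[OF T x] .
      also have "\<dots> \<le> C * (D * l2norm x)" using D[OF x] C(1) by (rule mult_left_mono)
      finally show ?thesis by simp
    qed
    show "(S \<circ> T) (x + y) = (S \<circ> T) x + (S \<circ> T) y" if "x \<in> ell2" "y \<in> ell2" for x y
      using that S T by (simp only: comp_apply bounded_op_add bounded_op_ell2)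
    show "(S \<circ> T) (scal a x) = scal a ((S \<circ> T) x)" if "x \<in> ell2" for x a
      using that S T by (simp only: comp_apply bounded_op_scal bounded_op_ell2)
    show "(S \<circ> T) x = 0" if "x \<notin> ell2" for x
      using bounded_op_outside[OF T that] bounded_op_zero[OF S] by simp
  qed (use S T in \<open>simp add: bounded_op_ell2\<close>)
qed

lemma bounded_op_plus:
  assumes S: "bounded_op S" and T: "bounded_op T"
  shows "bounded_op (\<lambda>x. S x + T x)"
proof -
  obtain C where C: "\<And>x. x \<in> ell2 \<Longrightarrow> l2norm (S x) \<le> C * l2norm x"
    using bounded_op_norm_bound[OF S] by blast
  obtain D where D: "\<And>x. x \<in> ell2 \<Longrightarrow> l2norm (T x) \<le> D * l2norm x"
    using bounded_op_norm_bound[OF T] by blast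
  show ?thesis
  proof (rule bounded_opI[where C = "C + D"])
    show "S x + T x \<in> ell2" if "x \<in> ell2" for x
      using that by (intro ell2_add bounded_op_ell2[OF S] bounded_op_ell2[OF T])
    show "S (x + y) + T (x + y) = (S x + T x) + (S y + T y)" if "x \<in> ell2" "y \<in> ell2" for x y
      using that by (simp only: bounded_op_add[OF S] bounded_op_add[OF T] ac_simps)
    show "S (scal a x) + T (scal a x) = scal a (S x + T x)" if "x \<in> ell2" for x a
      using that by (simp only: bounded_op_scal[OF S] bounded_op_scal[OF T] scal_add)
    show "l2norm (S x + T x) \<le> (C + D) * l2norm x" if x: "x \<in> ell2" for x
    proof -
      have "l2norm (S x + T x) \<le> l2norm (S x) + l2norm (T x)"
        using x by (intro l2norm_triangle bounded_op_ell2[OF S] bounded_op_ell2[OF T])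
      also have "\<dots> \<le> (C + D) * l2norm x" using C[OF x] D[OF x] by (simp add: distrib_right)
      finally show ?thesis .
    qed
    show "S x + T x = 0" if "x \<notin> ell2" for x
      by (simp only: bounded_op_outside[OF S that] bounded_op_outside[OF T that] add_0)
  qed
qed

lemma bounded_op_sum_ops:
  assumes "finite K" "\<And>k. k \<in> K \<Longrightarrow> bounded_op (T k)"
  shows "bounded_op (\<lambda>x. \<Sum>k\<in>K. T k x)"
  using assms
proof (induction K rule: finite_induct)
  case empty
  have "(\<lambda>x. \<Sum>k\<in>{}. T k x) = (\<lambda>x. 0)" by simp
  moreover have "bounded_op (\<lambda>x. 0)" by (rule bounded_opI[where C = 0]) simp_all
  ultimately show ?case by (simp only:)
next
  case (insert k K)
  have "(\<lambda>x. \<Sum>k\<in>insert k K. T k x) = (\<lambda>x. T k x + (\<Sum>k\<in>K. T k x))"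
    using insert.hyps by simp
  moreover have "bounded_op (\<lambda>x. T k x + (\<Sum>k\<in>K. T k x))"
    using insert by (intro bounded_op_plus) simp_all
  ultimately show ?case by (simp only:)
qed

lemma bounded_op_eqI:
  assumes S: "bounded_op S" and T: "bounded_op T" and eq: "\<And>x. x \<in> ell2 \<Longrightarrow> S x = T x"
  shows "S = T"
proof
  show "S x = T x" for x
    by (cases "x \<in> ell2") (simp_all add: eq bounded_op_outside[OF S] bounded_op_outside[OF T])
qed

lemma bounded_op_eq_cinnerI:
  assumes S: "bounded_op S" and T: "bounded_op T"
    and eq: "\<And>x y. x \<in> ell2 \<Longrightarrow> y \<in> ell2 \<Longrightarrow> cinner (S x) y = cinner (T x) y"
  shows "S = T"
  by (rule bounded_op_eqI[OF S T], rule ell2_eqI) (simp_all add: S T eq bounded_op_ell2)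

lemma l2_tendsto_bounded_op:
  assumes T: "bounded_op T" and "\<And>n. a n \<in> ell2" "b \<in> ell2" "l2_tendsto a b F"
  shows "l2_tendsto (\<lambda>n. T (a n)) (T b) F"
proof -
  obtain C where C: "C \<ge> 0" "\<And>x. x \<in> ell2 \<Longrightarrow> l2norm (T x) \<le> C * l2norm x"
    using bounded_op_norm_bound[OF T] by blast
  show ?thesis
  proof (rule Lim_null_comparison)
    show "\<forall>\<^sub>F n in F. norm (l2norm (T (a n) - T b)) \<le> C * l2norm (a n - b)"
      using assms C by (simp add: l2norm_nonneg bounded_op_diff[symmetric])
    show "((\<lambda>n. C * l2norm (a n - b)) \<longlongrightarrow> 0) F"
      using assms(4) by (rule tendsto_mult_right_zero)
  qed
qed

lemma bounded_op_strong_limit: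
  assumes T: "\<And>n. bounded_op (T n)"
    and bound: "\<And>n x. x \<in> ell2 \<Longrightarrow> l2norm (T n x) \<le> C * l2norm x"
    and lim: "\<And>x. x \<in> ell2 \<Longrightarrow> S x \<in> ell2 \<and> l2_tendsto (\<lambda>n. T n x) (S x) sequentially"
    and outside: "\<And>x. x \<notin> ell2 \<Longrightarrow> S x = 0"
  shows "bounded_op S"
proof (rule bounded_opI[where C = C])
  have Tx: "T n x \<in> ell2" if "x \<in> ell2" for n x using T that by (rule bounded_op_ell2)
  show "S x \<in> ell2" if "x \<in> ell2" for x using lim that by blast
  show "S (x + y) = S x + S y" if x: "x \<in> ell2" and y: "y \<in> ell2" for x y
  proof (rule l2_tendsto_unique[OF trivial_limit_sequentially])
    show "l2_tendsto (\<lambda>n. T n (x + y)) (S (x + y)) sequentially" using lim x y by simp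
    show "l2_tendsto (\<lambda>n. T n (x + y)) (S x + S y) sequentially"
      using l2_tendsto_add[of "\<lambda>n. T n x" "\<lambda>n. T n y"] lim x y Tx
      by (simp add: bounded_op_add[OF T])
  qed (use lim x y Tx in auto)
  show "S (scal a x) = scal a (S x)" if x: "x \<in> ell2" for x a
  proof (rule l2_tendsto_unique[OF trivial_limit_sequentially])
    show "l2_tendsto (\<lambda>n. T n (scal a x)) (S (scal a x)) sequentially" using lim x by simp
    show "l2_tendsto (\<lambda>n. T n (scal a x)) (scal a (S x)) sequentially"
      using l2_tendsto_scal[of "\<lambda>n. T n x" "S x" sequentially a] lim[OF x]
      by (simp add: bounded_op_scal[OF T x])
  qed (use lim x Tx in auto)
  show "l2norm (S x) \<le> C * l2norm x" if x: "x \<in> ell2" for x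
  proof (rule LIMSEQ_le_const)
    have "(\<lambda>n. l2norm (T n x - S x)) \<longlonglongrightarrow> 0" using lim x by blast
    from tendsto_add[OF this tendsto_const[of "C * l2norm x"]]
    show "(\<lambda>n. l2norm (T n x - S x) + C * l2norm x) \<longlonglongrightarrow> C * l2norm x" by simp
    have "l2norm (S x) \<le> l2norm (T n x - S x) + C * l2norm x" for n
    proof -
      have "l2norm (S x) \<le> l2norm (S x - T n x) + l2norm (T n x)"
        using l2norm_triangle[of "S x - T n x" "T n x"] lim x Tx by simp
      also have "\<dots> \<le> l2norm (T n x - S x) + C * l2norm x"
        using bound[OF x, of n] by (simp add: l2norm_minus_commute)
      finally show ?thesis .
    qed
    then show "\<exists>N. \<forall>n\<ge>N. l2norm (S x) \<le> l2norm (T n x - S x) + C * l2norm x"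
      by blast
  qed
  show "S x = 0" if "x \<notin> ell2" for x using outside that .
qed

section \<open>The adjoint\<close>

lemma cinner_bounded_op_restrict_vec:
  assumes "bounded_op T" "finite F" "x \<in> ell2"
  shows "cinner x (T (restrict_vec F y)) = (\<Sum>i\<in>F. y i * cinner x (T (basis_vec i)))"
  using assms
  by (simp add: restrict_vec_eq_sum bounded_op_sum bounded_op_scal cinner_sum_right
      bounded_op_ell2 cinner_scal_right)

text \<open>The \<open>i\<close>-th coordinate of \<open>T\<^sup>* x\<close> is \<open>\<langle>T e\<^sub>i, x\<rangle>\<close>; testing against the truncations of this
  vector bounds its norm by that of \<open>T\<close>.\<close>

lemma adjoint_coordinates_ell2:
  assumes T: "bounded_op T" and C: "\<And>x. x \<in> ell2 \<Longrightarrow> l2norm (T x) \<le> C * l2norm x"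
    and x: "x \<in> ell2"
  shows "(\<lambda>i. cinner (T (basis_vec i)) x) \<in> ell2"
    and "l2norm (\<lambda>i. cinner (T (basis_vec i)) x) \<le> C * l2norm x"
proof -
  define w where "w = (\<lambda>i. cinner (T (basis_vec i)) x)"
  have "L2_set (\<lambda>i. cmod (w i)) F \<le> C * l2norm x" if F: "finite F" for F
  proof -
    define z where "z = restrict_vec F w"
    have L2_set_eq: "L2_set (\<lambda>i. cmod (w i)) F = l2norm z"
      unfolding L2_set_def z_def l2norm_restrict_vec_power2[OF F, symmetric]
      by (simp add: l2norm_nonneg)
    have z: "z \<in> ell2"
      unfolding z_def restrict_vec_def by (rule ell2_finite_support) (auto intro: finite_subset[OF _ F])
    have "cinner x (T z) = (\<Sum>i\<in>F. w i * cnj (w i))"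
      unfolding z_def cinner_bounded_op_restrict_vec[OF T F x]
      by (simp add: restrict_vec_def w_def cnj_cinner)
    also have "\<dots> = (\<Sum>i\<in>F. complex_of_real ((cmod (w i))^2))"
      by (intro sum.cong refl) (metis complex_norm_square of_real_power)
    also have "\<dots> = complex_of_real ((l2norm z)^2)"
      unfolding z_def l2norm_restrict_vec_power2[OF F] by simp
    finally have "(l2norm z)^2 = cmod (cinner x (T z))"
      by (simp add: norm_power)
    also have "\<dots> \<le> l2norm x * l2norm (T z)"
      using z x T by (simp add: cinner_cauchy_schwarz bounded_op_ell2)
    also have "\<dots> \<le> l2norm x * (C * l2norm z)"
      using C[OF z] by (simp add: mult_left_mono l2norm_nonneg)
    finally have "l2norm z * l2norm z \<le> (C * l2norm x) * l2norm z"
      by (simp add: power2_eq_square algebra_simps)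
    then have "l2norm z \<le> C * l2norm x \<or> l2norm z = 0"
      using l2norm_nonneg[of z] by (auto simp: mult_le_cancel_right)
    then show ?thesis
      unfolding L2_set_eq using C[OF x] l2norm_nonneg[of "T x"] by auto
  qed
  then show "w \<in> ell2" "l2norm w \<le> C * l2norm x"
    by (fact ell2_l2norm_boundI)+
qed

lemma cinner_adjoint_coordinates:
  assumes T: "bounded_op T" and x: "x \<in> ell2" and y: "y \<in> ell2"
  shows "cinner (\<lambda>i. cinner (T (basis_vec i)) x) y = cinner x (T y)"
proof -
  obtain C where C: "\<And>x. x \<in> ell2 \<Longrightarrow> l2norm (T x) \<le> C * l2norm x"
    using bounded_op_norm_bound[OF T] by blast
  define w where "w = (\<lambda>i. cinner (T (basis_vec i)) x)"
  define g where "g = (\<lambda>i. cnj (w i) * y i)"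
  have w: "w \<in> ell2"
    unfolding w_def using T C x by (rule adjoint_coordinates_ell2(1))
  have "(g has_sum cinner w y) UNIV"
    unfolding g_def cinner_def[of w y] by (rule has_sum_infsum[OF cinner_summable[OF w y]])
  then have "(sum g \<longlongrightarrow> cinner w y) (finite_subsets_at_top UNIV)"
    by (simp add: has_sum_def)
  moreover have "(sum g \<longlongrightarrow> cinner x (T y)) (finite_subsets_at_top UNIV)"
  proof (rule Lim_transform_eventually)
    have lim: "l2_tendsto (\<lambda>F. T (restrict_vec F y)) (T y) (finite_subsets_at_top UNIV)"
      by (rule l2_tendsto_bounded_op[OF T _ y l2_tendsto_restrict_vec[OF y]]) (simp add: y)
    show "((\<lambda>F. cinner x (T (restrict_vec F y))) \<longlongrightarrow> cinner x (T y)) (finite_subsets_at_top UNIV)"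
      using T y by (intro l2_tendsto_cinner_right[OF _ _ x lim]) (simp_all add: bounded_op_ell2)
    show "\<forall>\<^sub>F F in finite_subsets_at_top UNIV. cinner x (T (restrict_vec F y)) = sum g F"
      by (intro eventually_finite_subsets_at_top_weakI)
         (simp add: g_def w_def cnj_cinner mult.commute cinner_bounded_op_restrict_vec[OF T _ x])
  qed
  ultimately show ?thesis
    unfolding w_def by (rule tendsto_unique[OF finite_subsets_at_top_neq_bot])
qed

lemma adjoint_exists:
  assumes T: "bounded_op T"
  shows "\<exists>S. bounded_op S \<and> (\<forall>x\<in>ell2. \<forall>y\<in>ell2. cinner (S x) y = cinner x (T y))"
proof -
  obtain C where C: "\<And>x. x \<in> ell2 \<Longrightarrow> l2norm (T x) \<le> C * l2norm x"
    using bounded_op_norm_bound[OF T] by blast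
  define S where "S x = (if x \<in> ell2 then (\<lambda>i. cinner (T (basis_vec i)) x) else 0)" for x
  have "bounded_op S"
  proof (rule bounded_opI[where C = C])
    show "S x \<in> ell2" "l2norm (S x) \<le> C * l2norm x" if "x \<in> ell2" for x
      using adjoint_coordinates_ell2[OF T C that] that by (simp_all add: S_def)
    show "S (x + y) = S x + S y" if "x \<in> ell2" "y \<in> ell2" for x y
      using that T by (auto simp: S_def fun_eq_iff cinner_add_right bounded_op_ell2)
    show "S (scal a x) = scal a (S x)" if "x \<in> ell2" for x a
      using that by (simp add: S_def cinner_scal_right) (simp add: scal_def)
    show "S x = 0" if "x \<notin> ell2" for x
      using that by (simp add: S_def)
  qed
  moreover have "\<forall>x\<in>ell2. \<forall>y\<in>ell2. cinner (S x) y = cinner x (T y)"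
    using cinner_adjoint_coordinates[OF T] by (simp add: S_def)
  ultimately show ?thesis by blast
qed

lemma adj_unique:
  assumes "bounded_op S1" "bounded_op S2"
    and "\<forall>x\<in>ell2. \<forall>y\<in>ell2. cinner (S1 x) y = cinner x (T y)"
    and "\<forall>x\<in>ell2. \<forall>y\<in>ell2. cinner (S2 x) y = cinner x (T y)"
  shows "S1 = S2"
  using assms by (intro bounded_op_eq_cinnerI) auto

lemma
  assumes "bounded_op T"
  shows bounded_op_adj: "bounded_op (adj T)"
    and cinner_adj_left: "\<And>x y. x \<in> ell2 \<Longrightarrow> y \<in> ell2 \<Longrightarrow> cinner (adj T x) y = cinner x (T y)"
proof -
  let ?P = "\<lambda>S. bounded_op S \<and> (\<forall>x\<in>ell2. \<forall>y\<in>ell2. cinner (S x) y = cinner x (T y))"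
  obtain S where S: "?P S" using adjoint_exists[OF assms] by blast
  have "?P (adj T)"
    unfolding adj_def by (rule theI[where P = ?P, OF S]) (use S adj_unique in blast)
  then show "bounded_op (adj T)" "\<And>x y. x \<in> ell2 \<Longrightarrow> y \<in> ell2 \<Longrightarrow> cinner (adj T x) y = cinner x (T y)"
    by blast+
qed

lemma cinner_adj_right:
  "bounded_op T \<Longrightarrow> x \<in> ell2 \<Longrightarrow> y \<in> ell2 \<Longrightarrow> cinner x (adj T y) = cinner (T x) y"
  by (metis cinner_adj_left cnj_cinner)

lemma adj_eqI:
  assumes "bounded_op T" "bounded_op S"
    and "\<And>x y. x \<in> ell2 \<Longrightarrow> y \<in> ell2 \<Longrightarrow> cinner (S x) y = cinner x (T y)"
  shows "adj T = S"
  using assms by (intro adj_unique[of _ _ T]) (auto simp: bounded_op_adj cinner_adj_left)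

lemma adj_adj: "bounded_op T \<Longrightarrow> adj (adj T) = T"
  by (rule adj_eqI) (auto simp: bounded_op_adj cinner_adj_right)

lemma adj_comp:
  assumes S: "bounded_op S" and T: "bounded_op T"
  shows "adj (S \<circ> T) = adj T \<circ> adj S"
proof (rule adj_eqI)
  show "bounded_op (S \<circ> T)" by (rule bounded_op_comp[OF S T])
  show "bounded_op (adj T \<circ> adj S)" by (rule bounded_op_comp[OF bounded_op_adj[OF T] bounded_op_adj[OF S]])
  show "cinner ((adj T \<circ> adj S) x) y = cinner x ((S \<circ> T) y)" if "x \<in> ell2" "y \<in> ell2" for x y
    using that S T by (simp add: cinner_adj_left bounded_op_adj bounded_op_ell2)
qed

section \<open>Kraus maps\<close>

context
  fixes V :: "nat \<Rightarrow> 'i op"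
  assumes bounded_V: "\<And>k. bounded_op (V k)"
    and trace_pres: "\<forall>x\<in>ell2. l2_tendsto (\<lambda>n. \<Sum>k<n. adj (V k) (V k x)) x sequentially"
begin

lemma ell2_V [simp]: "x \<in> ell2 \<Longrightarrow> V k x \<in> ell2"
  using bounded_V by (rule bounded_op_ell2)

lemma ell2_adj_V [simp]: "x \<in> ell2 \<Longrightarrow> adj (V k) x \<in> ell2"
  using bounded_op_adj[OF bounded_V] by (rule bounded_op_ell2)

lemma sum_cinner_V_tendsto:
  assumes x: "x \<in> ell2" and y: "y \<in> ell2"
  shows "(\<lambda>n. \<Sum>k<n. cinner (V k x) (V k y)) \<longlonglongrightarrow> cinner x y"
proof -
  have "cinner (\<Sum>k<n. adj (V k) (V k x)) y = (\<Sum>k<n. cinner (V k x) (V k y))" for n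
    using x y by (simp add: cinner_sum_left cinner_adj_left bounded_V)
  moreover have "(\<lambda>n. cinner (\<Sum>k<n. adj (V k) (V k x)) y) \<longlonglongrightarrow> cinner x y"
    using trace_pres x y by (intro l2_tendsto_cinner_left) simp_all
  ultimately show ?thesis by simp
qed

lemma sum_l2norm_V_tendsto:
  assumes "x \<in> ell2"
  shows "(\<lambda>n. \<Sum>k<n. (l2norm (V k x))^2) \<longlonglongrightarrow> (l2norm x)^2"
proof -
  have "(\<lambda>n. complex_of_real (\<Sum>k<n. (l2norm (V k x))^2)) \<longlonglongrightarrow> complex_of_real ((l2norm x)^2)"
    using sum_cinner_V_tendsto[OF assms assms] by (simp add: cinner_self)
  then show ?thesis by (simp only: tendsto_of_real_iff)
qed

lemma sum_l2norm_V_le: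
  assumes x: "x \<in> ell2" and K: "finite K"
  shows "(\<Sum>k\<in>K. (l2norm (V k x))^2) \<le> (l2norm x)^2"
proof -
  obtain N where "K \<subseteq> {..<N}" using finite_nat_bounded[OF K] by blast
  then have "(\<Sum>k\<in>K. (l2norm (V k x))^2) \<le> (\<Sum>k<N. (l2norm (V k x))^2)"
    by (intro sum_mono2) auto
  also have "\<dots> \<le> (l2norm x)^2"
    using sum_l2norm_V_tendsto[OF x] by (rule incseq_le[rotated]) (rule incseq_SucI, simp)
  finally show ?thesis .
qed

text \<open>Cauchy--Schwarz for the finite Kraus sums: pairing \<open>u = \<Sum>\<^sub>k V\<^sub>k\<^sup>* B V\<^sub>k x\<close> with itself
  gives \<open>\<parallel>u\<parallel>\<^sup>2 \<le> C \<Sum>\<^sub>k \<parallel>V\<^sub>k u\<parallel> \<parallel>V\<^sub>k x\<parallel> \<le> C \<parallel>u\<parallel> (\<Sum>\<^sub>k \<parallel>V\<^sub>k x\<parallel>\<^sup>2)\<^sup>1\<^sup>/\<^sup>2\<close>.\<close>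

lemma l2norm_kraus_sum_le:
  assumes B: "bounded_op B" and C: "C \<ge> 0" "\<And>x. x \<in> ell2 \<Longrightarrow> l2norm (B x) \<le> C * l2norm x"
    and x: "x \<in> ell2" and K: "finite K"
  shows "l2norm (\<Sum>k\<in>K. adj (V k) (B (V k x))) \<le> C * L2_set (\<lambda>k. l2norm (V k x)) K"
proof -
  define u where "u = (\<Sum>k\<in>K. adj (V k) (B (V k x)))"
  have BV: "B (V k x) \<in> ell2" for k using B x by (simp add: bounded_op_ell2)
  have u: "u \<in> ell2" unfolding u_def by (simp add: BV)
  have "(l2norm u)^2 = cmod (cinner u u)" by (simp add: cinner_self norm_power)
  also have "cinner u u = (\<Sum>k\<in>K. cinner (V k u) (B (V k x)))"
    by (subst (2) u_def) (simp add: cinner_sum_right cinner_adj_right bounded_V u BV)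
  also have "cmod \<dots> \<le> (\<Sum>k\<in>K. l2norm (V k u) * (C * l2norm (V k x)))"
  proof (rule order.trans[OF norm_sum sum_mono])
    fix k
    have "cmod (cinner (V k u) (B (V k x))) \<le> l2norm (V k u) * l2norm (B (V k x))"
      using u BV by (simp add: cinner_cauchy_schwarz)
    also have "\<dots> \<le> l2norm (V k u) * (C * l2norm (V k x))"
      using C(2)[of "V k x"] x by (simp add: mult_left_mono l2norm_nonneg)
    finally show "cmod (cinner (V k u) (B (V k x))) \<le> l2norm (V k u) * (C * l2norm (V k x))" .
  qed
  also have "\<dots> = C * (\<Sum>k\<in>K. \<bar>l2norm (V k u)\<bar> * \<bar>l2norm (V k x)\<bar>)"
    by (simp add: sum_distrib_left l2norm_nonneg mult_ac)
  also have "\<dots> \<le> C * (L2_set (\<lambda>k. l2norm (V k u)) K * L2_set (\<lambda>k. l2norm (V k x)) K)"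
    using C(1) by (intro mult_left_mono L2_set_mult_ineq)
  also have "\<dots> \<le> C * (l2norm u * L2_set (\<lambda>k. l2norm (V k x)) K)"
  proof -
    have "L2_set (\<lambda>k. l2norm (V k u)) K \<le> l2norm u"
      unfolding L2_set_def using sum_l2norm_V_le[OF u K]
      by (intro real_le_lsqrt l2norm_nonneg) simp
    then show ?thesis using C(1) by (intro mult_left_mono mult_right_mono L2_set_nonneg) auto
  qed
  finally have "l2norm u * l2norm u \<le> l2norm u * (C * L2_set (\<lambda>k. l2norm (V k x)) K)"
    by (simp add: power2_eq_square mult_ac)
  then show ?thesis
    unfolding u_def[symmetric]
    using l2norm_nonneg[of u] C(1) L2_set_nonneg[of "\<lambda>k. l2norm (V k x)" K]
    by (cases "l2norm u = 0") (auto simp: mult_le_cancel_left)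
qed

lemma l2norm_kraus_sum_diff_le:
  assumes B: "bounded_op B" and C: "C \<ge> 0" "\<And>x. x \<in> ell2 \<Longrightarrow> l2norm (B x) \<le> C * l2norm x"
    and x: "x \<in> ell2"
  shows "l2norm ((\<Sum>k<m. adj (V k) (B (V k x))) - (\<Sum>k<n. adj (V k) (B (V k x))))
    \<le> C * sqrt \<bar>(\<Sum>k<m. (l2norm (V k x))^2) - (\<Sum>k<n. (l2norm (V k x))^2)\<bar>"
proof -
  define s where "s n = (\<Sum>k<n. adj (V k) (B (V k x)))" for n
  define p where "p n = (\<Sum>k<n. (l2norm (V k x))^2)" for n
  have le: "l2norm (s m - s n) \<le> C * sqrt \<bar>p m - p n\<bar>" if "n \<le> m" for m n
  proof -
    have "s m - s n = (\<Sum>k\<in>{n..<m}. adj (V k) (B (V k x)))"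
      using that by (simp add: s_def sum_diff_nat_ivl lessThan_atLeast0)
    moreover have "(\<Sum>k\<in>{n..<m}. (l2norm (V k x))^2) = p m - p n"
      using that by (simp add: p_def sum_diff_nat_ivl lessThan_atLeast0)
    moreover have "p n \<le> p m"
      using that by (simp add: p_def sum_mono2)
    ultimately show ?thesis
      using l2norm_kraus_sum_le[OF B C x finite_atLeastLessThan, of n m] by (simp add: L2_set_def)
  qed
  have "l2norm (s m - s n) \<le> C * sqrt \<bar>p m - p n\<bar>"
  proof (cases "n \<le> m")
    case False
    then have "l2norm (s n - s m) \<le> C * sqrt \<bar>p n - p m\<bar>" by (intro le) simp
    then show ?thesis by (metis l2norm_minus_commute abs_minus_commute)
  qed (rule le)
  then show ?thesis by (simp add: s_def p_def)
qed

lemma kraus_sum_cauchy: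
  assumes B: "bounded_op B" and x: "x \<in> ell2"
  shows "\<exists>b\<in>ell2. l2_tendsto (\<lambda>n. \<Sum>k<n. adj (V k) (B (V k x))) b sequentially"
proof (rule ell2_complete)
  show "(\<Sum>k<n. adj (V k) (B (V k x))) \<in> ell2" for n
    using B x by (simp add: bounded_op_ell2)
  obtain C where C: "C \<ge> 0" "\<And>x. x \<in> ell2 \<Longrightarrow> l2norm (B x) \<le> C * l2norm x"
    using bounded_op_norm_bound[OF B] by blast
  define p where "p n = (\<Sum>k<n. (l2norm (V k x))^2)" for n
  have "Cauchy p"
    using sum_l2norm_V_tendsto[OF x] unfolding p_def[abs_def] by (rule LIMSEQ_imp_Cauchy)
  fix e :: real assume e: "e > 0"
  define d where "d = (e / (C + 1))^2"
  have "d > 0" using e C by (simp add: d_def)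
  with \<open>Cauchy p\<close> obtain N where N: "\<And>m n. m \<ge> N \<Longrightarrow> n \<ge> N \<Longrightarrow> dist (p m) (p n) < d"
    by (meson metric_CauchyD)
  have "C * sqrt d < e"
  proof -
    have "C * sqrt d = e * (C / (C + 1))" using e C by (simp add: d_def)
    also have "\<dots> < e * 1" using e C by (intro mult_strict_left_mono) auto
    finally show ?thesis by simp
  qed
  have "l2norm ((\<Sum>k<m. adj (V k) (B (V k x))) - (\<Sum>k<n. adj (V k) (B (V k x)))) < e"
    if "m \<ge> N" "n \<ge> N" for m n
  proof -
    have "C * sqrt \<bar>p m - p n\<bar> \<le> C * sqrt d"
      using N[OF that] C(1) by (intro mult_left_mono) (simp_all add: dist_real_def)
    then show ?thesis
      using l2norm_kraus_sum_diff_le[OF B C x, of m n] \<open>C * sqrt d < e\<close> by (simp add: p_def)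
  qed
  then show "\<exists>N. \<forall>m\<ge>N. \<forall>n\<ge>N.
      l2norm ((\<Sum>k<m. adj (V k) (B (V k x))) - (\<Sum>k<n. adj (V k) (B (V k x)))) < e"
    by blast
qed

lemma bounded_op_kraus_term: "bounded_op B \<Longrightarrow> bounded_op (\<lambda>x. adj (V k) (B (V k x)))"
  using bounded_op_comp[OF bounded_op_comp[OF bounded_op_adj[OF bounded_V]] bounded_V]
  by (simp add: comp_def)

lemma kraus_exists:
  assumes B: "bounded_op B"
  shows "\<exists>T. bounded_op T \<and>
    (\<forall>x\<in>ell2. l2_tendsto (\<lambda>n. \<Sum>k<n. adj (V k) (B (V k x))) (T x) sequentially)"
proof -
  define T where "T x = (if x \<in> ell2
      then SOME b. b \<in> ell2 \<and> l2_tendsto (\<lambda>n. \<Sum>k<n. adj (V k) (B (V k x))) b sequentially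
      else 0)" for x
  have T: "T x \<in> ell2 \<and> l2_tendsto (\<lambda>n. \<Sum>k<n. adj (V k) (B (V k x))) (T x) sequentially"
    if "x \<in> ell2" for x
    using someI_ex[OF kraus_sum_cauchy[OF B that, unfolded Bex_def]] that by (simp add: T_def)
  obtain C where C: "C \<ge> 0" "\<And>x. x \<in> ell2 \<Longrightarrow> l2norm (B x) \<le> C * l2norm x"
    using bounded_op_norm_bound[OF B] by blast
  have "bounded_op T"
  proof (rule bounded_op_strong_limit[where T = "\<lambda>n x. \<Sum>k<n. adj (V k) (B (V k x))" and C = C])
    show "bounded_op (\<lambda>x. \<Sum>k<n. adj (V k) (B (V k x)))" for n
      using B by (intro bounded_op_sum_ops bounded_op_kraus_term) simp_all
    show "l2norm (\<Sum>k<n. adj (V k) (B (V k x))) \<le> C * l2norm x" if x: "x \<in> ell2" for n x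
    proof -
      have "L2_set (\<lambda>k. l2norm (V k x)) {..<n} \<le> l2norm x"
        unfolding L2_set_def using sum_l2norm_V_le[OF x finite_lessThan]
        by (intro real_le_lsqrt l2norm_nonneg) simp
      then show ?thesis
        using l2norm_kraus_sum_le[OF B C x finite_lessThan] C(1) by (meson mult_left_mono order_trans)
    qed
  qed (use T in \<open>simp_all add: T_def\<close>)
  with T show ?thesis by blast
qed

lemma
  assumes B: "bounded_op B"
  shows bounded_op_kraus: "bounded_op (kraus V B)"
    and kraus_tendsto:
      "\<And>x. x \<in> ell2 \<Longrightarrow> l2_tendsto (\<lambda>n. \<Sum>k<n. adj (V k) (B (V k x))) (kraus V B x) sequentially"
proof -
  let ?P = "\<lambda>T. bounded_op T \<and>
    (\<forall>x\<in>ell2. l2_tendsto (\<lambda>n. \<Sum>k<n. adj (V k) (B (V k x))) (T x) sequentially)"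
  obtain T where T: "?P T" using kraus_exists[OF B] by blast
  have "T' = T" if "?P T'" for T'
  proof (rule bounded_op_eqI)
    show "T' x = T x" if "x \<in> ell2" for x
      using \<open>?P T'\<close> T B that
      by (intro l2_tendsto_unique[OF trivial_limit_sequentially, of "\<lambda>n. \<Sum>k<n. adj (V k) (B (V k x))"])
         (simp_all add: bounded_op_ell2)
  qed (use that T in blast)+
  then have "?P (kraus V B)"
    unfolding kraus_def by (rule theI[where P = ?P, OF T])
  then show "bounded_op (kraus V B)"
    "\<And>x. x \<in> ell2 \<Longrightarrow> l2_tendsto (\<lambda>n. \<Sum>k<n. adj (V k) (B (V k x))) (kraus V B x) sequentially"
    by blast+
qed

lemma kraus_cinner_tendsto:
  assumes B: "bounded_op B" and x: "x \<in> ell2" and y: "y \<in> ell2"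
  shows "(\<lambda>n. \<Sum>k<n. cinner (B (V k x)) (V k y)) \<longlonglongrightarrow> cinner (kraus V B x) y"
proof -
  have "cinner (\<Sum>k<n. adj (V k) (B (V k x))) y = (\<Sum>k<n. cinner (B (V k x)) (V k y))" for n
    using B x y by (simp add: cinner_sum_left cinner_adj_left bounded_V bounded_op_ell2)
  moreover have "(\<lambda>n. cinner (\<Sum>k<n. adj (V k) (B (V k x))) y) \<longlonglongrightarrow> cinner (kraus V B x) y"
    using B x y
    by (intro l2_tendsto_cinner_left kraus_tendsto) (simp_all add: bounded_op_ell2 bounded_op_kraus)
  ultimately show ?thesis by simp
qed

lemma kraus_adj:
  assumes A: "bounded_op A"
  shows "kraus V (adj A) = adj (kraus V A)"
proof (rule adj_eqI[symmetric])
  show "bounded_op (kraus V A)" "bounded_op (kraus V (adj A))"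
    using A by (simp_all add: bounded_op_kraus bounded_op_adj)
  show "cinner (kraus V (adj A) x) y = cinner x (kraus V A y)" if x: "x \<in> ell2" and y: "y \<in> ell2" for x y
  proof (rule tendsto_unique[OF trivial_limit_sequentially])
    show "(\<lambda>n. \<Sum>k<n. cinner (adj A (V k x)) (V k y)) \<longlonglongrightarrow> cinner (kraus V (adj A) x) y"
      using A x y by (intro kraus_cinner_tendsto) (simp_all add: bounded_op_adj)
    have "(\<lambda>n. cnj (\<Sum>k<n. cinner (A (V k y)) (V k x))) \<longlonglongrightarrow> cnj (cinner (kraus V A y) x)"
      using A x y by (intro tendsto_cnj kraus_cinner_tendsto)
    then show "(\<lambda>n. \<Sum>k<n. cinner (adj A (V k x)) (V k y)) \<longlonglongrightarrow> cinner x (kraus V A y)"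
      using A x y by (simp add: cnj_cinner cinner_adj_left)
  qed
qed

section \<open>The multiplicative domain\<close>

lemma kraus_defect_sums:
  assumes A: "bounded_op A" and x: "x \<in> ell2"
  shows "(\<lambda>k. (l2norm (A (V k x) - V k (kraus V A x)))^2) sums
    (Re (cinner (kraus V (adj A \<circ> A) x) x) - (l2norm (kraus V A x))^2)"
proof -
  define z where "z = kraus V A x"
  have z: "z \<in> ell2" unfolding z_def using A x by (simp add: bounded_op_ell2 bounded_op_kraus)
  have AV: "A (V k x) \<in> ell2" for k using A x by (simp add: bounded_op_ell2)
  have AA: "bounded_op (adj A \<circ> A)" using A by (simp add: bounded_op_comp bounded_op_adj)
  have "(\<lambda>n. \<Sum>k<n. cinner (A (V k x)) (A (V k x))) \<longlonglongrightarrow> cinner (kraus V (adj A \<circ> A) x) x"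
    using kraus_cinner_tendsto[OF AA x x] A x by (simp add: cinner_adj_left AV)
  moreover have AVz: "(\<lambda>n. \<Sum>k<n. cinner (A (V k x)) (V k z)) \<longlonglongrightarrow> cinner z z"
    using kraus_cinner_tendsto[OF A x z] by (simp add: z_def)
  moreover have "(\<lambda>n. \<Sum>k<n. cinner (V k z) (A (V k x))) \<longlonglongrightarrow> cinner z z"
    using tendsto_cnj[OF AVz] by (simp add: cnj_cinner)
  moreover have "(\<lambda>n. \<Sum>k<n. cinner (V k z) (V k z)) \<longlonglongrightarrow> cinner z z"
    by (rule sum_cinner_V_tendsto[OF z z])
  ultimately have "(\<lambda>n. (\<Sum>k<n. cinner (A (V k x)) (A (V k x))) - (\<Sum>k<n. cinner (A (V k x)) (V k z))
      - (\<Sum>k<n. cinner (V k z) (A (V k x))) + (\<Sum>k<n. cinner (V k z) (V k z)))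
      \<longlonglongrightarrow> cinner (kraus V (adj A \<circ> A) x) x - cinner z z - cinner z z + cinner z z"
    by (intro tendsto_intros)
  moreover have "cinner (A (V k x) - V k z) (A (V k x) - V k z) = cinner (A (V k x)) (A (V k x))
      - cinner (A (V k x)) (V k z) - cinner (V k z) (A (V k x)) + cinner (V k z) (V k z)" for k
    using AV z by (simp add: cinner_diff_left cinner_diff_right)
  ultimately have "(\<lambda>n. \<Sum>k<n. cinner (A (V k x) - V k z) (A (V k x) - V k z))
      \<longlonglongrightarrow> cinner (kraus V (adj A \<circ> A) x) x - cinner z z"
    by (simp add: sum.distrib sum_subtractf)
  then have "(\<lambda>n. complex_of_real (\<Sum>k<n. (l2norm (A (V k x) - V k z))^2))
      \<longlonglongrightarrow> cinner (kraus V (adj A \<circ> A) x) x - cinner z z"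
    by (simp add: cinner_self)
  from tendsto_Re[OF this] show ?thesis
    by (simp add: sums_def z_def cinner_self)
qed

lemma intertwining_if_kraus_adj_mult:
  assumes A: "bounded_op A" and eq: "kraus V (adj A \<circ> A) = adj (kraus V A) \<circ> kraus V A"
  shows "A \<circ> V k = V k \<circ> kraus V A"
proof (rule bounded_op_eqI)
  show "bounded_op (A \<circ> V k)" "bounded_op (V k \<circ> kraus V A)"
    using A by (simp_all add: bounded_op_comp bounded_V bounded_op_kraus)
  show "(A \<circ> V k) x = (V k \<circ> kraus V A) x" if x: "x \<in> ell2" for x
  proof -
    let ?z = "kraus V A x"
    have z: "?z \<in> ell2" using A x by (simp add: bounded_op_ell2 bounded_op_kraus)
    have "cinner (kraus V (adj A \<circ> A) x) x = complex_of_real ((l2norm ?z)^2)"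
      unfolding eq using A x z by (simp add: cinner_adj_left bounded_op_kraus cinner_self)
    define d where "d k = (l2norm (A (V k x) - V k ?z))^2" for k
    have "d sums 0"
      using kraus_defect_sums[OF A x] \<open>cinner (kraus V (adj A \<circ> A) x) x = _\<close>
      by (simp add: d_def[abs_def])
    then have "summable d" "suminf d = 0" by (simp_all add: sums_iff)
    then have "d k = 0" using suminf_eq_zero_iff[of d] by (simp add: d_def)
    then show ?thesis
      using l2norm_eq_zeroD[of "A (V k x) - V k ?z"] A x z by (simp add: d_def bounded_op_ell2)
  qed
qed

lemma kraus_adj_mult_if_intertwining:
  assumes A: "bounded_op A" and intertw: "\<And>k. A \<circ> V k = V k \<circ> kraus V A"
  shows "kraus V (adj A \<circ> A) = adj (kraus V A) \<circ> kraus V A"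
proof (rule bounded_op_eq_cinnerI)
  let ?F = "kraus V A"
  have F: "bounded_op ?F" using A by (rule bounded_op_kraus)
  have AA: "bounded_op (adj A \<circ> A)" using A by (simp add: bounded_op_comp bounded_op_adj)
  show "bounded_op (kraus V (adj A \<circ> A))" "bounded_op (adj ?F \<circ> ?F)"
    using AA F by (simp_all add: bounded_op_kraus bounded_op_comp bounded_op_adj)
  show "cinner (kraus V (adj A \<circ> A) x) y = cinner ((adj ?F \<circ> ?F) x) y"
    if x: "x \<in> ell2" and y: "y \<in> ell2" for x y
  proof (rule tendsto_unique[OF trivial_limit_sequentially])
    have "cinner ((adj A \<circ> A) (V k x)) (V k y) = cinner (A (V k x)) (A (V k y))" for k
      using A x y by (simp add: cinner_adj_left bounded_op_ell2)
    also have "cinner (A (V k x)) (A (V k y)) = cinner (V k (?F x)) (V k (?F y))" for k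
      using fun_cong[OF intertw[of k]] by simp
    finally have "cinner ((adj A \<circ> A) (V k x)) (V k y) = cinner (V k (?F x)) (V k (?F y))" for k .
    then show "(\<lambda>n. \<Sum>k<n. cinner (V k (?F x)) (V k (?F y))) \<longlonglongrightarrow> cinner (kraus V (adj A \<circ> A) x) y"
      using kraus_cinner_tendsto[OF AA x y] by simp
    show "(\<lambda>n. \<Sum>k<n. cinner (V k (?F x)) (V k (?F y))) \<longlonglongrightarrow> cinner ((adj ?F \<circ> ?F) x) y"
      using sum_cinner_V_tendsto F x y by (simp add: cinner_adj_left bounded_op_ell2)
  qed
qed

lemma kraus_adj_mult_iff_intertwining:
  "bounded_op A \<Longrightarrow>
    kraus V (adj A \<circ> A) = adj (kraus V A) \<circ> kraus V A \<longleftrightarrow> (\<forall>k. A \<circ> V k = V k \<circ> kraus V A)"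
  using intertwining_if_kraus_adj_mult kraus_adj_mult_if_intertwining by blast

lemma kraus_mult_adj_iff_intertwining:
  assumes A: "bounded_op A"
  shows "kraus V (A \<circ> adj A) = kraus V A \<circ> adj (kraus V A) \<longleftrightarrow>
    (\<forall>k. adj A \<circ> V k = V k \<circ> adj (kraus V A))"
  using kraus_adj_mult_iff_intertwining[OF bounded_op_adj[OF A]] A
  by (simp add: kraus_adj adj_adj bounded_op_kraus)

lemma intertwining_if_commutes:
  assumes A: "bounded_op A" and comm: "\<And>j k. A \<circ> (V j \<circ> adj (V k)) = (V j \<circ> adj (V k)) \<circ> A"
  shows "A \<circ> V k = V k \<circ> kraus V A"
proof (rule bounded_op_eqI)
  have AV: "bounded_op (A \<circ> V k)" using A by (simp add: bounded_op_comp bounded_V)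
  show "bounded_op (A \<circ> V k)" "bounded_op (V k \<circ> kraus V A)"
    using A by (simp_all add: bounded_op_comp bounded_V bounded_op_kraus)
  show "(A \<circ> V k) x = (V k \<circ> kraus V A) x" if x: "x \<in> ell2" for x
  proof -
    define s where "s n = (\<Sum>j<n. adj (V j) (V j x))" for n
    define t where "t n = (\<Sum>j<n. adj (V j) (A (V j x)))" for n
    have s: "s n \<in> ell2" for n using x by (simp add: s_def)
    have t: "t n \<in> ell2" for n using A x by (simp add: t_def bounded_op_ell2)
    have "A (V k (s n)) = V k (t n)" for n
    proof -
      have "A (V k (adj (V j) (V j x))) = V k (adj (V j) (A (V j x)))" for j
        using fun_cong[OF comm[of k j], of "V j x"] by simp
      then show ?thesis
        using A x by (simp add: s_def t_def bounded_op_sum[OF bounded_V] bounded_op_sum[OF A]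
            bounded_op_ell2)
    qed
    moreover have "l2_tendsto (\<lambda>n. (A \<circ> V k) (s n)) ((A \<circ> V k) x) sequentially"
      using trace_pres x by (intro l2_tendsto_bounded_op[OF AV s x]) (simp add: s_def)
    moreover have "l2_tendsto (\<lambda>n. V k (t n)) (V k (kraus V A x)) sequentially"
      using A x by (intro l2_tendsto_bounded_op[OF bounded_V t]) (simp_all add: t_def kraus_tendsto
          bounded_op_ell2 bounded_op_kraus)
    ultimately show ?thesis
      using A x t by (intro l2_tendsto_unique[OF trivial_limit_sequentially, of "\<lambda>n. V k (t n)"])
        (simp_all add: bounded_op_ell2 bounded_op_kraus)
  qed
qed

lemma commutes_adj:
  assumes A: "bounded_op A" and comm: "\<And>j k. A \<circ> (V j \<circ> adj (V k)) = (V j \<circ> adj (V k)) \<circ> A"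
  shows "adj A \<circ> (V j \<circ> adj (V k)) = (V j \<circ> adj (V k)) \<circ> adj A"
proof -
  have VV: "bounded_op (V k \<circ> adj (V j))" by (simp add: bounded_op_comp bounded_V bounded_op_adj)
  have "adj (A \<circ> (V k \<circ> adj (V j))) = adj ((V k \<circ> adj (V j)) \<circ> A)" by (simp only: comm)
  then show ?thesis
    using A VV by (simp add: adj_comp adj_adj bounded_V bounded_op_adj)
qed

lemma commutes_iff_intertwining:
  assumes A: "bounded_op A"
  shows "(\<forall>j k. A \<circ> (V j \<circ> adj (V k)) = (V j \<circ> adj (V k)) \<circ> A) \<longleftrightarrow>
    (\<forall>k. A \<circ> V k = V k \<circ> kraus V A) \<and> (\<forall>k. adj A \<circ> V k = V k \<circ> adj (kraus V A))"
proof safe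
  assume comm: "\<forall>j k. A \<circ> (V j \<circ> adj (V k)) = (V j \<circ> adj (V k)) \<circ> A"
  show "A \<circ> V k = V k \<circ> kraus V A" for k
    using intertwining_if_commutes[OF A] comm by blast
  show "adj A \<circ> V k = V k \<circ> adj (kraus V A)" for k
    using intertwining_if_commutes[OF bounded_op_adj[OF A] commutes_adj[OF A]] comm
    by (simp add: kraus_adj A)
next
  fix j k
  assume intertw: "\<forall>k. A \<circ> V k = V k \<circ> kraus V A"
    and intertw_adj: "\<forall>k. adj A \<circ> V k = V k \<circ> adj (kraus V A)"
  have adj_intertw: "adj (V k) \<circ> A = kraus V A \<circ> adj (V k)"
    using arg_cong[OF intertw_adj[rule_format, of k], of adj] A
    by (simp add: adj_comp adj_adj bounded_V bounded_op_adj bounded_op_kraus)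
  have "A \<circ> (V j \<circ> adj (V k)) = (A \<circ> V j) \<circ> adj (V k)" by (simp add: o_assoc)
  also have "\<dots> = V j \<circ> (kraus V A \<circ> adj (V k))" using intertw by (simp add: o_assoc)
  also have "\<dots> = (V j \<circ> adj (V k)) \<circ> A" by (simp add: adj_intertw comp_assoc)
  finally show "A \<circ> (V j \<circ> adj (V k)) = (V j \<circ> adj (V k)) \<circ> A" .
qed

end

theorem mainTheorem2:
  fixes V :: "nat \<Rightarrow> ('i::countable) op"
  assumes bounded: "\<And>k. bounded_op (V k)"
    and trace_pres: "\<forall>x\<in>ell2. (\<lambda>n. l2norm ((\<Sum>k<n. adj (V k) (V k x)) - x)) \<longlonglongrightarrow> 0"
  shows "mult_domain (kraus V) = commutant {V j \<circ> adj (V k) | j k. True}"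
proof (rule set_eqI)
  fix A
  have "A \<in> mult_domain (kraus V) \<longleftrightarrow> bounded_op A \<and>
      (\<forall>k. A \<circ> V k = V k \<circ> kraus V A) \<and> (\<forall>k. adj A \<circ> V k = V k \<circ> adj (kraus V A))"
    unfolding mult_domain_def
    using kraus_adj_mult_iff_intertwining[OF bounded trace_pres]
      kraus_mult_adj_iff_intertwining[OF bounded trace_pres]
    by blast
  also have "\<dots> \<longleftrightarrow> bounded_op A \<and> (\<forall>j k. A \<circ> (V j \<circ> adj (V k)) = (V j \<circ> adj (V k)) \<circ> A)"
    using commutes_iff_intertwining[OF bounded trace_pres] by blast
  also have "\<dots> \<longleftrightarrow> A \<in> commutant {V j \<circ> adj (V k) | j k. True}"
    unfolding commutant_def by blast
  finally show "A \<in> mult_domain (kraus V) \<longleftrightarrow> A \<in> commutant {V j \<circ> adj (V k) | j k. True}" .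
qed
end
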